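(* Let $q=q_0^2$ be odd and let $V$ be a vector space over $\mathbb{F}_q$ with a non-degenerate hermitian form $f$. Let $s\ge1$ and let $v=\sum_{i=1}^s v_i$ for singular vectors $v_1,\dots,v_s\in V$. Then there exist $1\le i\le s$ and $\lambda\in\mathbb{F}_{q_0}$ such that $v-\lambda v_i$ is singular.
   Context: The hermitian form satisfies $f(u,\lambda v+w)=\lambda f(u,v)+f(u,w)$ and $f(w,u)=f(u,w)^{q_0}$. A vector $v$ is singular if $f(v,v)=0$. *)

theory Defs
  imports Complex_Main "HOL-Library.Cardinality"
begin

text \<open>A hermitian form on the vector space V (given by the scalar multiplication
  scale over the field F_q, q = q0^2), linear in the second argument, with
  field involution x \<mapsto> x^q0.\<close>

definition hermitian_form ::
  "('k::field \<Rightarrow> 'v::ab_group_add \<Rightarrow> 'v) \<Rightarrow> nat \<Rightarrow> ('v \<Rightarrow> 'v \<Rightarrow> 'k) \<Rightarrow> bool" where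
  "hermitian_form scale q0 f \<longleftrightarrow>
     (\<forall>u v w c. f u (scale c v + w) = c * f u v + f u w) \<and>
     (\<forall>u w. f w u = f u w ^ q0)"

definition nondegenerate :: "('v::zero \<Rightarrow> 'v \<Rightarrow> 'k::zero) \<Rightarrow> bool" where
  "nondegenerate f \<longleftrightarrow> (\<forall>u. (\<forall>v. f u v = 0) \<longrightarrow> u = 0)"

definition singular :: "('v \<Rightarrow> 'v \<Rightarrow> 'k::zero) \<Rightarrow> 'v \<Rightarrow> bool" where
  "singular f v \<longleftrightarrow> f v v = 0"

definition subfield_Fq0 :: "nat \<Rightarrow> 'k::field set" where
  "subfield_Fq0 q0 = {x. x ^ q0 = x}"

end

theory Submission
  imports Defs "HOL-Algebra.Sylow" "HOL-Algebra.Multiplicative_Group" "HOL-Number_Theory.Residues"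
begin

text \<open>Write \<open>v = v\<^sub>1 + \<dots> + v\<^sub>s\<close>, \<open>A = f(v,v)\<close> and \<open>a\<^sub>i = f(v,v\<^sub>i)\<close>, so that
  \<open>A = \<Sum> a\<^sub>i\<close> and \<open>A\<close> lies in \<open>F\<^sub>q\<^sub>0\<close>. For \<open>\<lambda> \<in> F\<^sub>q\<^sub>0\<close> and singular \<open>v\<^sub>i\<close> one computes
  \<open>f(v - \<lambda>v\<^sub>i, v - \<lambda>v\<^sub>i) = A - \<lambda> Tr(a\<^sub>i)\<close> with the trace \<open>Tr(x) = x + x\<^sup>q\<^sup>0\<close>.
  The traces add up to \<open>Tr(A) = 2A\<close>, so if \<open>A \<noteq> 0\<close> some \<open>Tr(a\<^sub>i)\<close> is non-zero (\<open>q\<close> is odd)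
  and \<open>\<lambda> = A / Tr(a\<^sub>i)\<close> works; if \<open>A = 0\<close>, take \<open>\<lambda> = 0\<close>.

  What remains to know about \<open>F\<^sub>q\<close> is that
  \<open>x \<mapsto> x\<^sup>q\<^sup>0\<close> is additive, i.e.\ that \<open>q\<^sub>0\<close> is a power of the characteristic; this
  follows from Cauchy's theorem for the additive group, obtained here from Sylow's theorem.\<close>

lemma prime_CHAR_field: "prime CHAR('k::{field,finite})"
  using prime_CHAR_semidom finite_imp_CHAR_pos[OF finite_class.finite_UNIV] by blast

lemma prime_dvd_CARD_field_eq_CHAR:
  fixes r :: nat
  assumes "prime r" and "r dvd CARD('k::{field,finite})"
  shows "r = CHAR('k)"
proof -
  define G :: "'k monoid" where "G = \<lparr>carrier = UNIV, monoid.mult = (+), one = 0\<rparr>"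
  have "group G"
    by (rule groupI) (auto simp: G_def add.assoc intro: exI[of _ "- _"])
  moreover have "order G = r ^ 1 * (CARD('k) div r)"
    using assms(2) by (simp add: G_def order_def)
  ultimately obtain H where H: "subgroup H G" "card H = r"
    using sylow_thm[OF assms(1)] by (fastforce simp: G_def)
  have "card H > card {0::'k}"
    using H(2) prime_gt_1_nat[OF assms(1)] by simp
  then obtain x where x: "x \<in> H" "x \<noteq> 0"
    by (metis card_mono finite subsetI singletonI not_le)
  have pow_eq: "x [^]\<^bsub>G\<lparr>carrier := H\<rparr>\<^esub> n = of_nat n * x" for n :: nat
    by (induction n) (simp_all add: G_def distrib_right)
  have "x [^]\<^bsub>G\<lparr>carrier := H\<rparr>\<^esub> order (G\<lparr>carrier := H\<rparr>) = 0"
    using group.pow_order_eq_1[OF subgroup.subgroup_is_group[OF H(1) \<open>group G\<close>]] x(1)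
    by (simp add: G_def)
  then have "of_nat r * x = 0"
    using H(2) by (simp add: pow_eq order_def)
  then have "CHAR('k) dvd r"
    using x(2) by (simp add: of_nat_eq_0_iff_char_dvd)
  then show ?thesis
    using primes_dvd_imp_eq[OF prime_CHAR_field[where ?'k = 'k] assms(1)] by simp
qed

lemma dvd_CARD_field_eq_CHAR_power:
  fixes n :: nat
  assumes "n dvd CARD('k::{field,finite})"
  obtains i where "n = CHAR('k) ^ i"
proof -
  have "n \<noteq> 0"
    using assms by (intro notI) simp
  moreover have "\<not> is_unit CHAR('k)"
    using not_prime_unit prime_CHAR_field by blast
  ultimately obtain m where m: "n = CHAR('k) ^ multiplicity CHAR('k) n * m" "\<not> CHAR('k) dvd m"
    by (rule multiplicity_decompose')
  have "m = 1"
  proof (rule ccontr)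
    assume "m \<noteq> 1"
    then obtain r where r: "prime r" "r dvd m"
      using prime_factor_nat by blast
    have "m dvd n"
      using m(1) by (metis dvd_triv_right)
    then have "r = CHAR('k)"
      using prime_dvd_CARD_field_eq_CHAR r assms by (metis dvd_trans)
    then show False
      using r(2) m(2) by simp
  qed
  then show thesis
    using m(1) that by simp
qed

lemma two_neq_zero_if_odd_CARD:
  assumes "odd CARD('k::{field,finite})"
  shows "(2::'k) \<noteq> 0"
proof
  assume "(2::'k) = 0"
  then have "CHAR('k) dvd 2"
    using of_nat_eq_0_iff_char_dvd[where ?'a = 'k, of 2] by simp
  then have "CHAR('k) = 2"
    using primes_dvd_imp_eq[OF prime_CHAR_field[where ?'k = 'k] two_is_prime_nat] by simp
  then show False
    using assms CHAR_dvd_CARD[where ?'a = 'k] by simp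
qed

locale hermitian_space = vector_space scale
  for scale :: "'k::{field,finite} \<Rightarrow> 'v::ab_group_add \<Rightarrow> 'v" +
  fixes q0 :: nat and f :: "'v \<Rightarrow> 'v \<Rightarrow> 'k"
  assumes card_eq_square: "CARD('k) = q0 ^ 2"
    and hermitian_form: "hermitian_form scale q0 f"
begin

definition tr :: "'k \<Rightarrow> 'k"
  where "tr x = x + x ^ q0"

lemma q0_neq_zero: "q0 \<noteq> 0"
  using card_eq_square by (intro notI) simp

lemma q0_eq_CHAR_power: obtains i where "q0 = CHAR('k) ^ i"
proof -
  have "q0 dvd CARD('k)"
    using card_eq_square by (simp add: power2_eq_square)
  then show thesis
    using that by (rule dvd_CARD_field_eq_CHAR_power)
qed

lemma power_q0_add: "(x + y) ^ q0 = x ^ q0 + y ^ q0" for x y :: 'k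
proof -
  obtain i where "q0 = CHAR('k) ^ i"
    by (rule q0_eq_CHAR_power)
  then show ?thesis
    by (rule freshmans_dream'[OF prime_CHAR_field])
qed

lemma power_q0_diff: "(x - y) ^ q0 = x ^ q0 - y ^ q0" for x y :: 'k
  using power_q0_add[of "x - y" y] by (simp add: eq_diff_eq)

lemma power_q0_sum: "(sum g B) ^ q0 = (\<Sum>j\<in>B. g j ^ q0)" for g :: "'a \<Rightarrow> 'k"
proof -
  obtain i where "q0 = CHAR('k) ^ i"
    by (rule q0_eq_CHAR_power)
  then show ?thesis
    by (rule freshmans_dream_sum'[OF prime_CHAR_field])
qed

lemma linear_right: "f u (scale c v + w) = c * f u v + f u w"
  using hermitian_form unfolding hermitian_form_def by blast

lemma hermitian_sym: "f w u = f u w ^ q0"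
  using hermitian_form unfolding hermitian_form_def by blast

lemma form_power_q0_power_q0: "(f u w ^ q0) ^ q0 = f u w"
  using hermitian_sym[of u w, unfolded hermitian_sym[of w u]] by (rule sym)

lemma form_diag_power_q0: "f v v ^ q0 = f v v"
  using hermitian_sym[of v v] by (rule sym)

lemma add_right: "f u (v + w) = f u v + f u w"
  using linear_right[of u 1 v w] by simp

lemma diff_scale_right: "f u (w - scale c v) = f u w - c * f u v"
  using linear_right[of u "- c" v w] by simp

lemma zero_right: "f u 0 = 0"
  using diff_scale_right[of u 0 1 0] by simp

lemma sum_right: "f u (sum g B) = (\<Sum>j\<in>B. f u (g j))"
  by (induction B rule: infinite_finite_induct) (simp_all add: zero_right add_right)

lemma tr_form_power_q0: "tr (f u w) ^ q0 = tr (f u w)"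
  by (simp add: tr_def power_q0_add form_power_q0_power_q0)

lemma sum_tr_form_sum: "(\<Sum>j\<in>B. tr (f (sum vs B) (vs j))) = 2 * f (sum vs B) (sum vs B)"
  by (simp add: tr_def sum.distrib flip: power_q0_sum sum_right) (simp add: form_diag_power_q0)

lemma form_diff_scale_singular:
  assumes "singular f u" and "c ^ q0 = c"
  shows "f (v - scale c u) (v - scale c u) = f v v - c * tr (f v u)"
proof -
  have "f (v - scale c u) v = f v (v - scale c u) ^ q0"
    by (rule hermitian_sym)
  also have "\<dots> = (f v v - c * f v u) ^ q0"
    by (simp only: diff_scale_right)
  also have "\<dots> = f v v - c * f v u ^ q0"
    using assms(2) by (simp add: power_q0_diff power_mult_distrib form_diag_power_q0)
  finally have left_v: "f (v - scale c u) v = f v v - c * f v u ^ q0" .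
  have "f (v - scale c u) u = f u (v - scale c u) ^ q0"
    by (rule hermitian_sym)
  also have "\<dots> = f v u"
    using assms(1) by (simp add: diff_scale_right singular_def hermitian_sym[of v u])
  finally have left_u: "f (v - scale c u) u = f v u" .
  show ?thesis
    by (simp add: diff_scale_right left_v left_u tr_def algebra_simps)
qed

lemma exists_singular_diff_scale:
  assumes "odd CARD('k)" and "B \<noteq> {}" and "\<forall>i\<in>B. singular f (vs i)"
  shows "\<exists>i\<in>B. \<exists>c. c ^ q0 = c \<and> singular f (sum vs B - scale c (vs i))"
proof (cases "f (sum vs B) (sum vs B) = 0")
  case True
  obtain i where "i \<in> B"
    using assms(2) by blast
  then show ?thesis
    using True q0_neq_zero by (intro bexI[of _ i] exI[of _ 0]) (auto simp: singular_def)
next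
  case False
  define v where "v = sum vs B"
  have "(\<Sum>j\<in>B. tr (f v (vs j))) \<noteq> 0"
    using False sum_tr_form_sum[of vs B] two_neq_zero_if_odd_CARD[OF assms(1)]
    by (simp add: v_def)
  then obtain i where i: "i \<in> B" "tr (f v (vs i)) \<noteq> 0"
    by (meson sum.neutral)
  define c where "c = f v v / tr (f v (vs i))"
  have c_fixed: "c ^ q0 = c"
    by (simp add: c_def power_divide form_diag_power_q0 tr_form_power_q0)
  have "f (v - scale c (vs i)) (v - scale c (vs i)) = 0"
    using form_diff_scale_singular[OF _ c_fixed] assms(3) i by (simp add: c_def)
  then show ?thesis
    using i(1) c_fixed by (auto simp: singular_def v_def)
qed

end

theorem lemma4p19:
  fixes scale :: "'k::{field,finite} \<Rightarrow> 'v::ab_group_add \<Rightarrow> 'v"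
    and q0 :: nat
    and f :: "'v \<Rightarrow> 'v \<Rightarrow> 'k"
    and s :: nat
    and vs :: "nat \<Rightarrow> 'v"
  assumes "CARD('k) = q0 ^ 2"
    and "odd CARD('k)"
    and "Vector_Spaces.vector_space scale"
    and "hermitian_form scale q0 f"
    and "nondegenerate f"
    and "s \<ge> 1"
    and "\<forall>i\<in>{1..s}. singular f (vs i)"
  shows "\<exists>i\<in>{1..s}. \<exists>c\<in>subfield_Fq0 q0.
           singular f ((\<Sum>j=1..s. vs j) - scale c (vs i))"
proof -
  interpret hermitian_space scale q0 f
    using assms(1,3,4) by (simp add: hermitian_space_def hermitian_space_axioms_def)
  have "{1..s} \<noteq> {}"
    using assms(6) by simp
  then show ?thesis
    using exists_singular_diff_scale[OF assms(2) _ assms(7)] by (simp add: subfield_Fq0_def)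
qed

end
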